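(* For $n\ge1$ and $0\le k<n$, $$|\mathbf{I}_{n,k}(210)|=|\mathbf{I}_{n-1}(210)|-\sum_{l=k+1}^{n-4}\sum_{j=l+1}^{n-3}\sum_{i\le j}|\mathbf{I}_{n-3,i}(210)|.$$ Equivalently, $|\mathbf{I}_{n,k}(210)|=|\mathbf{I}_{n-1}(210)|$ if $1\le n\le4$ or $k>n-5\ge0$, and for $0\le k\le n-5$, $$|\mathbf{I}_{n,k}(210)|=|\mathbf{I}_{n-1}(210)|-\frac12\Big[(n-k-4)(n-k-3)\sum_{i=0}^{k+2}|\mathbf{I}_{n-3,i}(210)|+\sum_{i=k+3}^{n-4}(n-i-2)(n+i-2k-5)|\mathbf{I}_{n-3,i}(210)|\Big].$$
   Context: An inversion sequence of length $n$ is an integer sequence $e=e_1\dots e_n$ with $0\le e_i<i$ for all $i$; $\mathbf{I}_n$ denotes the set of these. $\mathbf{I}_n(210)$ is the set of $e\in\mathbf{I}_n$ with no $i$ such that $e_i>e_{i+1}>e_{i+2}$ (avoiding the consecutive pattern $210$). $\mathbf{I}_{n,k}(210)=\{e\in\mathbf{I}_n(210):e_n=k\}$, empty for $k\ge n$. Conventions: $|\mathbf{I}_0(210)|=1$; empty sums are $0$. *)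

theory Defs
  imports Complex_Main
begin

text \<open>Inversion sequences e_1 ... e_n are represented as lists of length n,
  with 0-based indexing: the i-th entry (1-based) is e ! (i - 1), so the
  condition 0 \<le> e_i < i becomes e ! i < i + 1 for i < n.\<close>

definition inv_seqs :: "nat \<Rightarrow> nat list set" where
  "inv_seqs n = {e. length e = n \<and> (\<forall>i<n. e ! i < Suc i)}"

definition avoids_210 :: "nat list \<Rightarrow> bool" where
  "avoids_210 e \<longleftrightarrow> \<not> (\<exists>i. i + 2 < length e \<and> e ! i > e ! (i + 1) \<and> e ! (i + 1) > e ! (i + 2))"

definition I210 :: "nat \<Rightarrow> nat list set" where
  "I210 n = {e \<in> inv_seqs n. avoids_210 e}"

definition I210k :: "nat \<Rightarrow> nat \<Rightarrow> nat list set" where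
  "I210k n k = {e \<in> I210 n. 0 < n \<and> e ! (n - 1) = k}"

end

theory Submission
  imports Defs
begin

text \<open>Appending k to e \<in> I_{n-1}(210) gives an element of I_{n,k}(210) unless e ends with a
  descent j > l > k. These bad e are exactly f j l with k < l < j \<le> n - 3 and
  f \<in> I_{n-3}(210) whose last entry is at most j, so they number
  \<Sum>_l \<Sum>_j \<Sum>_{i\<le>j} |I_{n-3,i}(210)|. The closed form follows by exchanging the order of
  summation: |I_{n-3,i}(210)| is counted once for every pair k < l < j \<le> n - 3 with i \<le> j.\<close>

lemma length_I210: "e \<in> I210 m \<Longrightarrow> length e = m"
  by (simp add: I210_def inv_seqs_def)

lemma finite_I210: "finite (I210 m)"
proof (rule finite_subset)
  show "I210 m \<subseteq> {e. set e \<subseteq> {..<m} \<and> length e = m}"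
    by (fastforce simp: I210_def inv_seqs_def in_set_conv_nth)
  show "finite {e. set e \<subseteq> {..<m} \<and> length e = m}"
    by (rule finite_lists_length_eq) simp
qed

definition ends_descent_above :: "nat \<Rightarrow> nat list \<Rightarrow> bool" where
  "ends_descent_above x e \<longleftrightarrow> (\<exists>f j l. e = f @ [j, l] \<and> x < l \<and> l < j)"

lemma ends_descent_above_snoc:
  "ends_descent_above x (e @ [y]) \<longleftrightarrow> e \<noteq> [] \<and> x < y \<and> y < last e"
proof
  assume "ends_descent_above x (e @ [y])"
  then obtain f j where "e = f @ [j]" "x < y" "y < j"
    by (auto simp: ends_descent_above_def)
  then show "e \<noteq> [] \<and> x < y \<and> y < last e" by simp
next
  assume "e \<noteq> [] \<and> x < y \<and> y < last e"
  then show "ends_descent_above x (e @ [y])"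
    unfolding ends_descent_above_def
    by (intro exI[of _ "butlast e"] exI[of _ "last e"] exI[of _ y]) simp
qed

lemma snoc_in_inv_seqs_iff:
  "length e = m \<Longrightarrow> e @ [x] \<in> inv_seqs (Suc m) \<longleftrightarrow> e \<in> inv_seqs m \<and> x \<le> m"
  unfolding inv_seqs_def by (force simp: nth_append less_Suc_eq)

lemma avoids_210_snoc:
  "avoids_210 (e @ [x]) \<longleftrightarrow> avoids_210 e \<and> \<not> ends_descent_above x e"
proof
  assume av: "avoids_210 (e @ [x])"
  have "avoids_210 e"
    unfolding avoids_210_def
  proof clarify
    fix i assume "i + 2 < length e" "e ! i > e ! (i + 1)" "e ! (i + 1) > e ! (i + 2)"
    moreover have "(e @ [x]) ! i = e ! i" "(e @ [x]) ! (i + 1) = e ! (i + 1)"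
      "(e @ [x]) ! (i + 2) = e ! (i + 2)"
      using \<open>i + 2 < length e\<close> by (simp_all add: nth_append)
    ultimately show False
      using av unfolding avoids_210_def by (metis length_append_singleton less_SucI)
  qed
  moreover have "\<not> ends_descent_above x e"
  proof
    assume "ends_descent_above x e"
    then obtain f j l where "e = f @ [j, l]" "x < l" "l < j"
      by (auto simp: ends_descent_above_def)
    then have "length f + 2 < length (e @ [x])" "(e @ [x]) ! length f = j"
      "(e @ [x]) ! (length f + 1) = l" "(e @ [x]) ! (length f + 2) = x"
      by (simp_all add: nth_append)
    with av \<open>x < l\<close> \<open>l < j\<close> show False unfolding avoids_210_def by metis
  qed
  ultimately show "avoids_210 e \<and> \<not> ends_descent_above x e" ..
next
  assume "avoids_210 e \<and> \<not> ends_descent_above x e"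
  then have av: "avoids_210 e" and nd: "\<not> ends_descent_above x e" by auto
  show "avoids_210 (e @ [x])"
    unfolding avoids_210_def
  proof
    assume "\<exists>i. i + 2 < length (e @ [x]) \<and> (e @ [x]) ! i > (e @ [x]) ! (i + 1)
              \<and> (e @ [x]) ! (i + 1) > (e @ [x]) ! (i + 2)"
    then obtain i where i: "i + 2 < length (e @ [x])" "(e @ [x]) ! i > (e @ [x]) ! (i + 1)"
      "(e @ [x]) ! (i + 1) > (e @ [x]) ! (i + 2)" by blast
    show False
    proof (cases "i + 2 < length e")
      case True
      with i av show False by (auto simp: avoids_210_def nth_append)
    next
      case False
      with i have len: "length e = i + 2" by simp
      then have "e = take i e @ [e ! i, e ! (i + 1)]"
        by (metis append_take_drop_id Cons_nth_drop_Suc drop_all order_refl lessI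
            less_add_Suc1 add_2_eq_Suc' Suc_eq_plus1)
      then obtain f j l where e: "e = f @ [j, l]" by blast
      with len i nd show False
        by (auto simp: ends_descent_above_def nth_append)
    qed
  qed
qed

lemma snoc_in_I210_iff:
  "length e = m \<Longrightarrow>
   e @ [x] \<in> I210 (Suc m) \<longleftrightarrow> e \<in> I210 m \<and> x \<le> m \<and> \<not> ends_descent_above x e"
  by (auto simp: I210_def snoc_in_inv_seqs_iff avoids_210_snoc)

lemma I210_Suc_snocE:
  assumes "e \<in> I210 (Suc m)"
  obtains f x where "e = f @ [x]" "length f = m"
  using length_I210[OF assms] by (cases e rule: rev_cases) auto

lemma I210k_Suc_eq_image:
  assumes "k \<le> m"
  shows "I210k (Suc m) k = (\<lambda>e. e @ [k]) ` {e \<in> I210 m. \<not> ends_descent_above k e}"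
proof (intro equalityI subsetI)
  fix e assume "e \<in> I210k (Suc m) k"
  then have "e \<in> I210 (Suc m)" "e ! m = k" by (auto simp: I210k_def)
  then obtain f where "e = f @ [k]" "length f = m"
    by (metis I210_Suc_snocE nth_append_length)
  with \<open>e \<in> I210 (Suc m)\<close> show "e \<in> (\<lambda>e. e @ [k]) ` {e \<in> I210 m. \<not> ends_descent_above k e}"
    by (auto simp: snoc_in_I210_iff)
next
  fix e assume "e \<in> (\<lambda>e. e @ [k]) ` {e \<in> I210 m. \<not> ends_descent_above k e}"
  then obtain f where "e = f @ [k]" "f \<in> I210 m" "\<not> ends_descent_above k f" by blast
  with assms show "e \<in> I210k (Suc m) k"
    by (auto simp: I210k_def snoc_in_I210_iff length_I210 nth_append)
qed

lemma card_I210k_Suc: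
  assumes "k \<le> m"
  shows "card (I210k (Suc m) k) + card {e \<in> I210 m. ends_descent_above k e} = card (I210 m)"
proof -
  have "card (I210k (Suc m) k) = card {e \<in> I210 m. \<not> ends_descent_above k e}"
    unfolding I210k_Suc_eq_image[OF assms] by (rule card_image) (simp add: inj_on_def)
  moreover have "card {e \<in> I210 m. \<not> ends_descent_above k e}
      + card {e \<in> I210 m. ends_descent_above k e} = card (I210 m)"
    using finite_I210 by (subst card_Un_disjoint[symmetric]) (auto intro: arg_cong[where f = card])
  ultimately show ?thesis by simp
qed

lemma descents_above_eq_image:
  "{e \<in> I210 m. ends_descent_above k e} =
   (\<lambda>(l, j, f). f @ [j, l]) ` (SIGMA l:{k+1..m-3}. SIGMA j:{l+1..m-2}. {f \<in> I210 (m-2). last f \<le> j})"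
  (is "?D = ?h ` ?S")
proof (intro equalityI subsetI)
  fix e assume "e \<in> ?D"
  then obtain f j l where e: "e = f @ [j, l]" "k < l" "l < j" and "e \<in> I210 m"
    by (auto simp: ends_descent_above_def)
  moreover from this have m: "length f = m - 2" "2 \<le> m" by (auto dest: length_I210)
  moreover have "Suc (Suc (m - 2)) = m" using m by simp
  ultimately have "f @ [j] \<in> I210 (Suc (m - 2)) \<and> \<not> ends_descent_above l (f @ [j])"
    using snoc_in_I210_iff[of "f @ [j]" "Suc (m - 2)" l] by simp
  moreover from this have "f \<in> I210 (m - 2) \<and> j \<le> m - 2"
    using m snoc_in_I210_iff[of f "m - 2" j] by simp
  moreover from this have "f \<noteq> []" using m e by auto
  ultimately have "(l, j, f) \<in> ?S"
    using e by (auto simp: ends_descent_above_snoc)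
  then show "e \<in> ?h ` ?S"
    using e by (intro image_eqI[where x = "(l, j, f)"]) simp_all
next
  fix e assume "e \<in> ?h ` ?S"
  then obtain l j f where e: "e = f @ [j, l]" "k < l" "l < j" "j \<le> m - 2"
    and f: "f \<in> I210 (m - 2)" "last f \<le> j" by auto
  have len: "length f = m - 2" using f(1) by (rule length_I210)
  with e have "f \<noteq> []" by auto
  with f e have "\<not> ends_descent_above j f"
    by (auto simp: ends_descent_above_def)
  with f e len have "f @ [j] \<in> I210 (Suc (m - 2))"
    by (simp add: snoc_in_I210_iff)
  with f e len \<open>f \<noteq> []\<close> have "(f @ [j]) @ [l] \<in> I210 (Suc (Suc (m - 2)))"
    by (subst snoc_in_I210_iff) (simp_all add: ends_descent_above_snoc)
  moreover have "Suc (Suc (m - 2)) = m" using e by simp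
  ultimately show "e \<in> ?D"
    using e unfolding ends_descent_above_def by auto
qed

lemma card_descents_above:
  "card {e \<in> I210 m. ends_descent_above k e} =
   (\<Sum>l\<in>{k+1..m-3}. \<Sum>j\<in>{l+1..m-2}. card {f \<in> I210 (m-2). last f \<le> j})"
proof -
  have "inj_on (\<lambda>(l, j, f). f @ [j, l])
          (SIGMA l:{k+1..m-3}. SIGMA j:{l+1..m-2}. {f \<in> I210 (m-2). last f \<le> j})"
    by (auto simp: inj_on_def)
  then show ?thesis
    unfolding descents_above_eq_image by (simp add: card_image finite_I210)
qed

lemma card_I210_last_le:
  assumes "0 < p"
  shows "card {f \<in> I210 p. last f \<le> j} = (\<Sum>i\<in>{0..j}. card (I210k p i))"
proof -
  have "last f = f ! (p - 1)" if "f \<in> I210 p" for f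
    using that assms by (metis last_conv_nth length_I210 list.size(3) less_numeral_extra(3))
  then have "{f \<in> I210 p. last f \<le> j} = (\<Union>i\<in>{0..j}. I210k p i)"
    using assms by (auto simp: I210k_def)
  moreover have "card (\<Union>i\<in>{0..j}. I210k p i) = (\<Sum>i\<in>{0..j}. card (I210k p i))"
    by (rule card_UN_disjoint) (auto simp: I210k_def intro: finite_subset[OF _ finite_I210])
  ultimately show ?thesis by simp
qed

lemma I210k_eq_empty:
  assumes "n \<le> k"
  shows "I210k n k = {}"
proof -
  have "e ! (n - 1) < n" if "e \<in> I210 n" "0 < n" for e
    using that by (auto simp: I210_def inv_seqs_def elim!: allE[of _ "n - 1"])
  with assms show ?thesis by (fastforce simp: I210k_def)
qed

lemma card_I210k_recurrence:
  assumes "k < n"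
  shows "card (I210k n k) + (\<Sum>l\<in>{k+1..n-4}. \<Sum>j\<in>{l+1..n-3}. \<Sum>i\<in>{0..j}. card (I210k (n-3) i))
         = card (I210 (n-1))"
proof -
  obtain m where m: "n = Suc m" using assms by (cases n) auto
  have "card {f \<in> I210 (m-2). last f \<le> j} = (\<Sum>i\<in>{0..j}. card (I210k (m-2) i))"
    if "l \<in> {k+1..m-3}" "j \<in> {l+1..m-2}" for l j
    using that by (intro card_I210_last_le) auto
  then have "card {e \<in> I210 m. ends_descent_above k e} =
      (\<Sum>l\<in>{k+1..n-4}. \<Sum>j\<in>{l+1..n-3}. \<Sum>i\<in>{0..j}. card (I210k (n-3) i))"
    unfolding card_descents_above m by (simp add: numeral_eq_Suc)
  with card_I210k_Suc[of k m] assms m show ?thesis by simp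
qed

lemma sum_triangle_extend:
  fixes f :: "nat \<Rightarrow> 'a::comm_semiring_1"
  assumes "a \<le> M + 1"
  shows "(\<Sum>l\<in>{a..M + 1}. \<Sum>j\<in>{l + 1..M + 2}. f j)
       = (\<Sum>l\<in>{a..M}. \<Sum>j\<in>{l + 1..M + 1}. f j) + of_nat (M + 2 - a) * f (M + 2)"
proof -
  have "(\<Sum>l\<in>{a..M + 1}. \<Sum>j\<in>{l + 1..M + 2}. f j)
      = (\<Sum>l\<in>{a..M + 1}. (\<Sum>j\<in>{l + 1..M + 1}. f j) + f (M + 2))"
    by (intro sum.cong) (auto simp: numeral_2_eq_2)
  also have "\<dots> = (\<Sum>l\<in>{a..M + 1}. \<Sum>j\<in>{l + 1..M + 1}. f j) + of_nat (M + 2 - a) * f (M + 2)"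
    by (simp add: sum.distrib)
  also have "(\<Sum>l\<in>{a..M + 1}. \<Sum>j\<in>{l + 1..M + 1}. f j) = (\<Sum>l\<in>{a..M}. \<Sum>j\<in>{l + 1..M + 1}. f j)"
    using assms by simp
  finally show ?thesis .
qed

text \<open>The weight of a i is twice the number of pairs k < l < j \<le> k + 2 + d with i \<le> j.
  Passing from d to d + 1 adds d + 2 pairs, all with j = k + 3 + d, so every weight up to
  k + 3 + d grows by 2 (d + 2).\<close>

lemma double_sum_partial_sums:
  fixes a :: "nat \<Rightarrow> real"
  shows "2 * (\<Sum>l\<in>{k + 1..k + 1 + d}. \<Sum>j\<in>{l + 1..k + 2 + d}. \<Sum>i\<le>j. a i)
       = (\<Sum>i\<le>k + 2 + d. (if i \<le> k + 2 then real (d + 1) * real (d + 2)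
                            else (real k + 3 + real d - real i) * (real d + real i - real k)) * a i)"
proof (induction d)
  case 0
  then show ?case by (simp add: numeral_2_eq_2 sum_distrib_left)
next
  case (Suc d)
  define w where "w d i = (if i \<le> k + 2 then real (d + 1) * real (d + 2)
                           else (real k + 3 + real d - real i) * (real d + real i - real k))" for d i
  let ?N = "Suc (k + 2 + d)"
  have step: "w (Suc d) i = w d i + 2 * real (d + 2)" for i
    by (simp add: w_def algebra_simps)
  have idx: "k + 1 + Suc d = (k + 1 + d) + 1" "k + 2 + Suc d = (k + 1 + d) + 2"
    "k + 2 + d = (k + 1 + d) + 1" "?N = (k + 1 + d) + 2"
    by simp_all
  have "(\<Sum>l\<in>{k + 1..k + 1 + Suc d}. \<Sum>j\<in>{l + 1..k + 2 + Suc d}. \<Sum>i\<le>j. a i)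
      = (\<Sum>l\<in>{k + 1..k + 1 + d}. \<Sum>j\<in>{l + 1..k + 2 + d}. \<Sum>i\<le>j. a i)
        + real (d + 2) * (\<Sum>i\<le>?N. a i)"
    unfolding idx by (subst sum_triangle_extend) simp_all
  then have "2 * (\<Sum>l\<in>{k + 1..k + 1 + Suc d}. \<Sum>j\<in>{l + 1..k + 2 + Suc d}. \<Sum>i\<le>j. a i)
      = 2 * (\<Sum>l\<in>{k + 1..k + 1 + d}. \<Sum>j\<in>{l + 1..k + 2 + d}. \<Sum>i\<le>j. a i)
        + 2 * real (d + 2) * (\<Sum>i\<le>?N. a i)"
    by (simp add: algebra_simps)
  also have "\<dots> = (\<Sum>i\<le>k + 2 + d. w d i * a i) + 2 * real (d + 2) * (\<Sum>i\<le>?N. a i)"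
    using Suc.IH by (simp only: w_def)
  also have "(\<Sum>i\<le>k + 2 + d. w d i * a i) = (\<Sum>i\<le>?N. w d i * a i)"
    by (simp only: sum.atMost_Suc) (simp add: w_def)
  also have "\<dots> + 2 * real (d + 2) * (\<Sum>i\<le>?N. a i)
      = (\<Sum>i\<le>?N. w d i * a i) + (\<Sum>i\<le>?N. 2 * real (d + 2) * a i)"
    by (simp only: sum_distrib_left)
  also have "\<dots> = (\<Sum>i\<le>?N. w (Suc d) i * a i)"
    by (simp add: step sum.distrib[symmetric] algebra_simps)
  finally show ?case by (simp add: w_def add.commute add.left_commute)
qed

lemma triple_sum_partial_sums_closed_form:
  fixes a :: "nat \<Rightarrow> real"
  assumes "k + 5 \<le> n" "a (n - 3) = 0"
  shows "2 * (\<Sum>l\<in>{k+1..n-4}. \<Sum>j\<in>{l+1..n-3}. \<Sum>i\<in>{0..j}. a i)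
       = real (n - k - 4) * real (n - k - 3) * (\<Sum>i=0..k+2. a i)
         + (\<Sum>i=k+3..n-4. real (n - i - 2) * (real n + real i - 2 * real k - 5) * a i)"
proof -
  obtain d where n: "n = k + 5 + d" using assms(1) le_Suc_ex by blast
  define w where "w i = (real k + 3 + real d - real i) * (real d + real i - real k)" for i
  have idx: "n - 4 = k + 1 + d" "n - 3 = k + 2 + d" using n by simp_all
  have "2 * (\<Sum>l\<in>{k+1..n-4}. \<Sum>j\<in>{l+1..n-3}. \<Sum>i\<in>{0..j}. a i)
      = (\<Sum>i\<le>k + 2 + d. (if i \<le> k + 2 then real (d + 1) * real (d + 2) else w i) * a i)"
    unfolding idx atLeast0AtMost w_def by (rule double_sum_partial_sums)
  also have "\<dots> = (\<Sum>i\<le>k + 2. real (d + 1) * real (d + 2) * a i) + (\<Sum>i=k+3..k+2+d. w i * a i)"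
    unfolding sum_up_index_split by (intro arg_cong2[where f = "(+)"] sum.cong) auto
  also have "\<dots> = real (d + 1) * real (d + 2) * (\<Sum>i\<le>k + 2. a i) + (\<Sum>i=k+3..k+2+d. w i * a i)"
    by (simp only: sum_distrib_left)
  also have "(\<Sum>i=k+3..k+2+d. w i * a i) = (\<Sum>i=k+3..n-4. w i * a i)"
    using assms(2) by (cases d) (simp_all add: n numeral_eq_Suc)
  also have "\<dots> = (\<Sum>i=k+3..n-4. real (n - i - 2) * (real n + real i - 2 * real k - 5) * a i)"
    by (intro sum.cong) (auto simp: n w_def of_nat_diff algebra_simps)
  finally show ?thesis by (simp add: n atLeast0AtMost)
qed

lemma atLeastAtMost_int_eq_image: "{int a + 1..int b - int c} = int ` {a + 1..b - c}"
proof (cases "c \<le> b")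
  case True
  then show ?thesis by (simp add: image_int_atLeastAtMost of_nat_diff)
next
  case False
  then show ?thesis by auto
qed

lemma sum_int_triangle_eq_nat:
  fixes f :: "nat \<Rightarrow> 'a::comm_monoid_add"
  shows "(\<Sum>l\<in>{int k + 1..int n - numeral c}. \<Sum>j\<in>{l + 1..int n - numeral c'}. \<Sum>i\<in>{0..j}. f (nat i))
       = (\<Sum>l\<in>{k + 1..n - numeral c}. \<Sum>j\<in>{l + 1..n - numeral c'}. \<Sum>i\<in>{0..j}. f i)"
proof -
  have "{int a + 1..int b - numeral c} = int ` {a + 1..b - numeral c}" for a b c
    using atLeastAtMost_int_eq_image[of a b "numeral c"] by simp
  moreover have "{0..int j} = int ` {0..j}" for j
    by (simp add: image_int_atLeastAtMost)
  ultimately show ?thesis by (simp add: sum.reindex)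
qed

theorem mainTheorem15:
  fixes n k :: nat
  assumes "1 \<le> n" and "k < n"
  shows "int (card (I210k n k)) =
           int (card (I210 (n - 1)))
           - (\<Sum>l\<in>{int k + 1..int n - 4}. \<Sum>j\<in>{l + 1..int n - 3}. \<Sum>i\<in>{0..j}.
                 int (card (I210k (n - 3) (nat i))))
    \<and> ((n \<le> 4 \<or> (5 \<le> n \<and> n - 5 < k)) \<longrightarrow> card (I210k n k) = card (I210 (n - 1)))
    \<and> ((5 \<le> n \<and> k \<le> n - 5) \<longrightarrow>
         real (card (I210k n k)) =
           real (card (I210 (n - 1)))
           - 1/2 * ( real (n - k - 4) * real (n - k - 3)
                       * (\<Sum>i=0..k+2. real (card (I210k (n - 3) i)))
                    + (\<Sum>i=k+3..n-4. real (n - i - 2) * (real n + real i - 2 * real k - 5)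
                                       * real (card (I210k (n - 3) i)))))"
    (is "?int \<and> (?small \<longrightarrow> _) \<and> (?large \<longrightarrow> _ = _ - 1/2 * ?W)")
proof -
  define T where "T = (\<Sum>l\<in>{k+1..n-4}. \<Sum>j\<in>{l+1..n-3}. \<Sum>i\<in>{0..j}. card (I210k (n - 3) i))"
  have rec: "card (I210 (n - 1)) = card (I210k n k) + T"
    unfolding T_def using card_I210k_recurrence[OF assms(2)] by simp
  then have ?int
    using sum_int_triangle_eq_nat[of "\<lambda>i. int (card (I210k (n - 3) i))"] by (simp add: T_def)
  moreover have "T = 0" if ?small
  proof -
    from that have "{k+1..n-4} = {}" by auto
    then show ?thesis by (simp add: T_def)
  qed
  moreover have "2 * real T = ?W" if ?large
    using that unfolding T_def of_nat_sum
    by (intro triple_sum_partial_sums_closed_form) (auto simp: I210k_eq_empty)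
  ultimately show ?thesis
    using rec by (intro conjI impI) simp_all
qed

end
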